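(* Let $\mathbb{F}$ be a field and let $\mathcal{C}_2 \subsetneqq \mathcal{C}_1 \subseteq \mathbb{F}^n$ be linear codes with $\ell = \dim(\mathcal{C}_1) - \dim(\mathcal{C}_2)$. Then for all integers $1 \leq r \leq \ell$ and $0 \leq \mu \leq n$: $$d_{H,r}(\mathcal{C}_1,\mathcal{C}_2) = d_{M,r}(\Delta(\mathcal{C}_1), \Delta(\mathcal{C}_2)), \qquad K_{H,\mu}(\mathcal{C}_1,\mathcal{C}_2) = K_{M,\mu}(\Delta(\mathcal{C}_1), \Delta(\mathcal{C}_2)).$$
   Context: $\Delta : \mathbb{F}^n \to \mathbb{F}^{n \times n}$ sends $\mathbf{c}$ to the diagonal matrix ${\rm diag}(\mathbf{c})$. For $I \subseteq \{1,\dots,n\}$, $\mathcal{L}_I = \{(c_1,\dots,c_n) \in \mathbb{F}^n \mid c_i = 0 \ \forall i \notin I\}$. Relative generalized Hamming weights: $d_{H,r}(\mathcal{C}_1,\mathcal{C}_2) = \min\{|I| \mid I \subseteq \{1,\dots,n\}, \dim(\mathcal{C}_1 \cap \mathcal{L}_I) - \dim(\mathcal{C}_2 \cap \mathcal{L}_I) \ge r\}$; relative dimension/length profile: $K_{H,\mu}(\mathcal{C}_1,\mathcal{C}_2) = \max\{\dim(\mathcal{C}_1 \cap \mathcal{L}_I) - \dim(\mathcal{C}_2 \cap \mathcal{L}_I) \mid |I| \le \mu\}$. On matrices in $\mathbb{F}^{n\times n}$ (here $m = n$): ${\rm Row}(V)$ is the row space; for a subspace $\mathcal{L}\subseteq\mathbb{F}^n$,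 $\mathcal{V}_\mathcal{L} = \{V \in \mathbb{F}^{n\times n} \mid {\rm Row}(V) \subseteq \mathcal{L}\}$; for nested linear codes $\mathcal{D}_2 \subsetneqq \mathcal{D}_1 \subseteq \mathbb{F}^{n\times n}$, $d_{M,r}(\mathcal{D}_1,\mathcal{D}_2) = \min\{\dim \mathcal{L} \mid \dim(\mathcal{D}_1 \cap \mathcal{V}_\mathcal{L}) - \dim(\mathcal{D}_2 \cap \mathcal{V}_\mathcal{L}) \ge r\}$ and $K_{M,\mu}(\mathcal{D}_1,\mathcal{D}_2) = \max\{\dim(\mathcal{D}_1 \cap \mathcal{V}_\mathcal{L}) - \dim(\mathcal{D}_2 \cap \mathcal{V}_\mathcal{L}) \mid \dim\mathcal{L} \le \mu\}$, over subspaces $\mathcal{L} \subseteq \mathbb{F}^n$. *)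

theory Defs
  imports "HOL-Analysis.Analysis"
begin

text \<open>F^n is modelled as 'a^'n with n = CARD('n); n x n matrices as 'a^'n^'n
  (row i of V is V $ i).  Linear codes are subspaces w.r.t. vec (scalar mult *s).\<close>

definition mat_scale :: "'a::field \<Rightarrow> 'a^'n^'m \<Rightarrow> 'a^'n^'m" where
  "mat_scale c V = (\<chi> i j. c * V $ i $ j)"

interpretation mat: vector_space "mat_scale :: 'a::field \<Rightarrow> 'a^'n^'m \<Rightarrow> 'a^'n^'m"
  by unfold_locales (auto simp: mat_scale_def vec_eq_iff algebra_simps)

definition Delta :: "'a::field^'n \<Rightarrow> 'a^'n^'n" where
  "Delta c = (\<chi> i j. if i = j then c $ i else 0)"

definition LI :: "'n set \<Rightarrow> ('a::field^'n) set" where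
  "LI I = {c. \<forall>i. i \<notin> I \<longrightarrow> c $ i = 0}"

definition dHr :: "nat \<Rightarrow> ('a::field^'n) set \<Rightarrow> ('a^'n) set \<Rightarrow> nat" where
  "dHr r C1 C2 = (LEAST m. \<exists>I::'n set. card I = m \<and>
      int (vec.dim (C1 \<inter> LI I)) - int (vec.dim (C2 \<inter> LI I)) \<ge> int r)"

definition KH :: "nat \<Rightarrow> ('a::field^'n) set \<Rightarrow> ('a^'n) set \<Rightarrow> int" where
  "KH \<mu> C1 C2 = Max {int (vec.dim (C1 \<inter> LI I)) - int (vec.dim (C2 \<inter> LI I)) | I::'n set. card I \<le> \<mu>}"

definition Row :: "'a::field^'n^'m \<Rightarrow> ('a^'n) set" where
  "Row V = vec.span {V $ i | i. True}"

definition VL :: "('a::field^'n) set \<Rightarrow> ('a^'n^'m) set" where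
  "VL L = {V. Row V \<subseteq> L}"

definition dMr :: "nat \<Rightarrow> ('a::field^'n^'m) set \<Rightarrow> ('a^'n^'m) set \<Rightarrow> nat" where
  "dMr r D1 D2 = (LEAST m. \<exists>L::('a^'n) set. vec.subspace L \<and> vec.dim L = m \<and>
      int (mat.dim (D1 \<inter> VL L)) - int (mat.dim (D2 \<inter> VL L)) \<ge> int r)"

definition KM :: "nat \<Rightarrow> ('a::field^'n^'m) set \<Rightarrow> ('a^'n^'m) set \<Rightarrow> int" where
  "KM \<mu> D1 D2 = Max {int (mat.dim (D1 \<inter> VL L)) - int (mat.dim (D2 \<inter> VL L)) | L::('a^'n) set.
      vec.subspace L \<and> vec.dim L \<le> \<mu>}"

end

theory Submission imports Defs begin

text \<open>The rows of diag(c) are the vectors c_i e_i, so diag(c) lies in V_L exactly when c is supported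
  on the set I_L (\<open>axis_support L\<close>) of coordinates i with e_i \<in> L; hence \<Delta>(C) \<inter> V_L = \<Delta>(C \<inter> L_{I_L}), and \<Delta> preserves
  dimension. Since |I_L| \<le> dim L, and conversely L = L_I is a subspace of dimension at most |I| with
  I_L = I, every value of the matrix profiles is attained by the Hamming profiles at no larger size,
  and vice versa.\<close>

definition axis_support :: "('a::field^'n) set \<Rightarrow> 'n set" where
  "axis_support L = {i. axis i 1 \<in> L}"

lemma Delta_linear: "Vector_Spaces.linear (*s) mat_scale (Delta :: 'a::field^'n \<Rightarrow> _)"
  by unfold_locales (auto simp: Delta_def mat_scale_def vec_eq_iff)

lemma inj_Delta: "inj Delta"
  unfolding inj_def Delta_def vec_eq_iff by (metis (mono_tags, lifting) vec_lambda_beta)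

lemma dim_image_Delta: "mat.dim (Delta ` S) = vec.dim (S :: ('a::field^'n) set)"
proof -
  interpret P: finite_dimensional_vector_space_pair_1 "(*s)" "cart_basis :: ('a^'n) set"
    "mat_scale :: 'a \<Rightarrow> 'a^'n^'n \<Rightarrow> _"
    by unfold_locales
  show ?thesis
    by (rule P.dim_image_eq[OF Delta_linear]) (auto intro: inj_on_subset[OF inj_Delta])
qed

lemma Delta_row: "Delta c $ i = c $ i *s axis i 1"
  by (auto simp: Delta_def vec_eq_iff axis_def)

lemma VL_iff_rows:
  assumes "vec.subspace L"
  shows "V \<in> VL L \<longleftrightarrow> (\<forall>i. V $ i \<in> L)"
proof
  assume "V \<in> VL L"
  then show "\<forall>i. V $ i \<in> L"
    unfolding VL_def Row_def by (blast intro: vec.span_base)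
next
  assume "\<forall>i. V $ i \<in> L"
  then have "{V $ i | i. True} \<subseteq> L" by blast
  then have "vec.span {V $ i | i. True} \<subseteq> L" by (rule vec.span_minimal[OF _ assms])
  then show "V \<in> VL L" unfolding VL_def Row_def by simp
qed

lemma subspace_scale_iff:
  assumes "vec.subspace L"
  shows "a *s x \<in> L \<longleftrightarrow> a = 0 \<or> x \<in> L"
proof
  assume ax: "a *s x \<in> L"
  show "a = 0 \<or> x \<in> L"
  proof (cases "a = 0")
    case False
    have "inverse a *s (a *s x) \<in> L" using vec.subspace_scale[OF assms ax] .
    with False show ?thesis by simp
  qed simp
qed (use vec.subspace_scale[OF assms] vec.subspace_0[OF assms] in auto)

lemma Delta_in_VL_iff:
  assumes "vec.subspace L"
  shows "Delta c \<in> VL L \<longleftrightarrow> c \<in> LI (axis_support L)"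
  by (auto simp: VL_iff_rows[OF assms] Delta_row subspace_scale_iff[OF assms] LI_def axis_support_def)

lemma image_Delta_Int_VL:
  "vec.subspace L \<Longrightarrow> Delta ` C \<inter> VL L = Delta ` (C \<inter> LI (axis_support L))"
  using Delta_in_VL_iff by auto

lemma dim_image_Delta_Int_VL:
  "vec.subspace L \<Longrightarrow> mat.dim (Delta ` C \<inter> VL L) = vec.dim (C \<inter> LI (axis_support L))"
  by (simp add: image_Delta_Int_VL dim_image_Delta)

lemma card_axis_support_le_dim:
  fixes L :: "('a::field^'n) set"
  shows "card (axis_support L) \<le> vec.dim L"
proof -
  have "card (axis_support L) = card ((\<lambda>i. axis i (1::'a)) ` axis_support L)"
    by (rule card_image[symmetric]) (auto simp: inj_on_def axis_eq_axis)
  also have "\<dots> \<le> vec.dim L"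
  proof (rule vec.independent_card_le_dim)
    show "(\<lambda>i. axis i 1) ` axis_support L \<subseteq> L" by (auto simp: axis_support_def)
    show "vec.independent ((\<lambda>i. axis i (1::'a)) ` axis_support L)"
      by (rule vec.independent_mono[OF independent_cart_basis]) (auto simp: cart_basis_def)
  qed
  finally show ?thesis .
qed

lemma subspace_LI: "vec.subspace (LI I)"
  by (auto simp: vec.subspace_def LI_def)

lemma axis_support_LI: "axis_support (LI I :: ('a::field^'n) set) = I"
  by (auto simp: axis_support_def LI_def axis_def)

lemma dim_LI_le_card: "vec.dim (LI I :: ('a::field^'n) set) \<le> card I"
proof -
  have "LI I \<subseteq> vec.span ((\<lambda>i. axis i (1::'a)) ` I)"
  proof
    fix c :: "'a^'n" assume c: "c \<in> LI I"
    have "c = (\<Sum>i\<in>UNIV. c$i *s axis i 1)" by (simp add: basis_expansion)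
    also have "\<dots> = (\<Sum>i\<in>I. c$i *s axis i 1)"
      by (rule sum.mono_neutral_right) (use c in \<open>auto simp: LI_def\<close>)
    also have "\<dots> \<in> vec.span ((\<lambda>i. axis i (1::'a)) ` I)"
      by (intro vec.span_sum vec.span_scale vec.span_base) auto
    finally show "c \<in> vec.span ((\<lambda>i. axis i (1::'a)) ` I)" .
  qed
  then have "vec.dim (LI I :: ('a::field^'n) set) \<le> card ((\<lambda>i. axis i (1::'a)) ` I)"
    by (rule vec.dim_le_card) auto
  also have "\<dots> \<le> card I" by (rule card_image_le) auto
  finally show ?thesis .
qed

text \<open>No witness is needed: if neither predicate holds anywhere, both are \<open>\<lambda>_. False\<close>.\<close>
lemma Least_eq_if_mutually_bounded:
  fixes P Q :: "nat \<Rightarrow> bool"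
  assumes PQ: "\<And>m. P m \<Longrightarrow> \<exists>m'\<le>m. Q m'" and QP: "\<And>m. Q m \<Longrightarrow> \<exists>m'\<le>m. P m'"
  shows "Least P = Least Q"
proof (cases "\<exists>k. P k")
  case True
  then have "P (Least P)" by (blast intro: LeastI)
  then obtain a where "a \<le> Least P" "Q a" using PQ by blast
  then have QP_le: "Least Q \<le> Least P" using Least_le[of Q a] by linarith
  then have "Q (Least Q)" using \<open>Q a\<close> by (blast intro: LeastI)
  then obtain b where "b \<le> Least Q" "P b" using QP by blast
  then have "Least P \<le> Least Q" using Least_le[of P b] by linarith
  with QP_le show ?thesis by simp
next
  case False
  then have "P = (\<lambda>_. False)" "Q = (\<lambda>_. False)" using QP by blast+
  then show ?thesis by simp
qed

lemma dHr_eq_dMr_Delta: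
  fixes C1 C2 :: "('a::field^'n) set"
  shows "dHr r C1 C2 = dMr r (Delta ` C1) (Delta ` C2)"
  unfolding dHr_def dMr_def
proof (rule Least_eq_if_mutually_bounded)
  fix m assume "\<exists>I::'n set. card I = m \<and>
    int r \<le> int (vec.dim (C1 \<inter> LI I)) - int (vec.dim (C2 \<inter> LI I))"
  then obtain I :: "'n set" where "card I = m"
    "int r \<le> int (vec.dim (C1 \<inter> LI I)) - int (vec.dim (C2 \<inter> LI I))" by blast
  then show "\<exists>m'\<le>m. \<exists>L::('a^'n) set. vec.subspace L \<and> vec.dim L = m' \<and>
      int r \<le> int (mat.dim (Delta ` C1 \<inter> VL L)) - int (mat.dim (Delta ` C2 \<inter> VL L))"
    using dim_LI_le_card[of I] subspace_LI[of I]
    by (metis dim_image_Delta_Int_VL axis_support_LI)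
next
  fix m assume "\<exists>L::('a^'n) set. vec.subspace L \<and> vec.dim L = m \<and>
      int r \<le> int (mat.dim (Delta ` C1 \<inter> VL L)) - int (mat.dim (Delta ` C2 \<inter> VL L))"
  then obtain L :: "('a^'n) set" where "vec.subspace L" "vec.dim L = m"
      "int r \<le> int (mat.dim (Delta ` C1 \<inter> VL L)) - int (mat.dim (Delta ` C2 \<inter> VL L))" by blast
  then show "\<exists>m'\<le>m. \<exists>I::'n set. card I = m' \<and>
      int r \<le> int (vec.dim (C1 \<inter> LI I)) - int (vec.dim (C2 \<inter> LI I))"
    using card_axis_support_le_dim[of L] by (metis dim_image_Delta_Int_VL)
qed

lemma KH_eq_KM_Delta:
  fixes C1 C2 :: "('a::field^'n) set"
  shows "KH \<mu> C1 C2 = KM \<mu> (Delta ` C1) (Delta ` C2)"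
proof -
  define rel where "rel I = int (vec.dim (C1 \<inter> LI I)) - int (vec.dim (C2 \<inter> LI I))"
    for I :: "'n set"
  have rel_Delta: "int (mat.dim (Delta ` C1 \<inter> VL L)) - int (mat.dim (Delta ` C2 \<inter> VL L))
      = rel (axis_support L)" if "vec.subspace L" for L :: "('a^'n) set"
    using that by (simp add: dim_image_Delta_Int_VL rel_def)
  have "{rel I | I. card I \<le> \<mu>} =
      {int (mat.dim (Delta ` C1 \<inter> VL L)) - int (mat.dim (Delta ` C2 \<inter> VL L)) | L.
        vec.subspace L \<and> vec.dim L \<le> \<mu>}" (is "?H = ?M")
  proof (intro equalityI subsetI)
    fix x assume "x \<in> ?H"
    then obtain I where "x = rel I" "card I \<le> \<mu>" by blast
    moreover have "vec.dim (LI I :: ('a^'n) set) \<le> \<mu>"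
      using le_trans[OF dim_LI_le_card \<open>card I \<le> \<mu>\<close>] .
    ultimately show "x \<in> ?M"
      using subspace_LI[of I] rel_Delta[OF subspace_LI, of I]
      by (intro CollectI exI[of _ "LI I"]) (simp add: axis_support_LI)
  next
    fix x assume "x \<in> ?M"
    then obtain L where "vec.subspace L" "vec.dim L \<le> \<mu>"
      "x = int (mat.dim (Delta ` C1 \<inter> VL L)) - int (mat.dim (Delta ` C2 \<inter> VL L))" by blast
    then show "x \<in> ?H"
      using card_axis_support_le_dim[of L] rel_Delta[of L]
      by (auto intro!: exI[of _ "axis_support L"])
  qed
  then show ?thesis unfolding KH_def KM_def rel_def by simp
qed

theorem theorem8:
  fixes C1 C2 :: "('a::field ^ 'n) set"
  assumes "vec.subspace C1" and "vec.subspace C2" and "C2 \<subset> C1"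
    and "1 \<le> r" and "r \<le> vec.dim C1 - vec.dim C2"
    and "\<mu> \<le> CARD('n)"
  shows "dHr r C1 C2 = dMr r (Delta ` C1) (Delta ` C2)
    \<and> KH \<mu> C1 C2 = KM \<mu> (Delta ` C1) (Delta ` C2)"
  using dHr_eq_dMr_Delta KH_eq_KM_Delta by blast

end
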